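(* Consider the map $q:\mathbb{G}\to[0,1)$ defined by $q(z_1+z_2,z_1z_2)=|\varphi_{z_1}(z_2)|=\left|\frac{z_1-z_2}{1-\overline{z_1}z_2}\right|$ for $z_1,z_2\in\mathbb{D}$, and let $\Delta=\{(2z,z^2):z\in\mathbb{D}\}$. Then: (1) $q|_{\mathbb{G}-\Delta}:\mathbb{G}-\Delta\to(0,1)$ is a submersion; (2) $q$ defines a three-dimensional foliation $\mathscr{L}$ of $\mathbb{G}-\Delta$ whose leaves are $\mathscr{L}_a=q^{-1}\{a\}$, $a\in(0,1)$; (3) each leaf $\mathscr{L}_a$ is a real $3$-manifold; (4) for each $a\in(0,1)$, $\mathscr{L}_a=\mathscr{F}_a/\mathbb{Z}_2$, where $\mathscr{F}_a=\{(z_1,z_2)\in\mathbb{D}\times\mathbb{D}: |\varphi_{z_1}(z_2)|=a\}$ and $\mathbb{Z}_2=\{\pm1\}$ acts on $\mathscr{F}_a$ by $(-1)\cdot(z_1,z_2)=(z_2,z_1)$ (the quotient map being $(z_1,z_2)\mapsto(z_1+z_2,z_1z_2)$).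
   Context: $\mathbb{D}$ is the open unit disc in $\mathbb{C}$; $\mathbb{G}=\{(z_1+z_2,z_1z_2):z_1,z_2\in\mathbb{D}\}$ is the symmetrized bidisc, regarded as a real $4$-manifold (open subset of $\mathbb{C}^2\cong\mathbb{R}^4$). The value $q(s,p)$ does not depend on the ordering of $z_1,z_2$. For $\alpha\in\mathbb{D}$, $\varphi_\alpha(z)=\frac{\alpha-z}{1-\overline{\alpha}z}$. *)

theory Defs
  imports "HOL-Analysis.Analysis"
begin

definition unit_disc :: "complex set" where
  "unit_disc = ball 0 1"

definition moeb :: "complex \<Rightarrow> complex \<Rightarrow> complex" where
  "moeb \<alpha> z = (\<alpha> - z) / (1 - cnj \<alpha> * z)"

definition symm :: "complex \<times> complex \<Rightarrow> complex \<times> complex" where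
  "symm w = (fst w + snd w, fst w * snd w)"

definition symG :: "(complex \<times> complex) set" where
  "symG = {(z1 + z2, z1 * z2) | z1 z2. z1 \<in> unit_disc \<and> z2 \<in> unit_disc}"

definition royal :: "(complex \<times> complex) set" where
  "royal = {(2 * z, z ^ 2) | z. z \<in> unit_disc}"

text \<open>q(z1+z2, z1 z2) = |phi_{z1}(z2)|; well defined on G (independent of ordering).\<close>
definition qmap :: "complex \<times> complex \<Rightarrow> real" where
  "qmap x = (THE a. \<exists>z1 z2. z1 \<in> unit_disc \<and> z2 \<in> unit_disc \<and>
                          x = (z1 + z2, z1 * z2) \<and> a = cmod (moeb z1 z2))"

definition Fa :: "real \<Rightarrow> (complex \<times> complex) set" where
  "Fa a = {(z1, z2). z1 \<in> unit_disc \<and> z2 \<in> unit_disc \<and> cmod (moeb z1 z2) = a}"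

text \<open>C-infinity on an open set: all iterated partial derivatives exist and are continuous.\<close>
definition smooth_on :: "'a::euclidean_space set \<Rightarrow> ('a \<Rightarrow> 'b::real_normed_vector) \<Rightarrow> bool" where
  "smooth_on S f \<longleftrightarrow>
     (\<exists>F. f \<in> F \<and>
        (\<forall>g\<in>F. continuous_on S g \<and>
           (\<forall>i\<in>Basis. \<exists>g'\<in>F. \<forall>x\<in>S.
               ((\<lambda>t. g (x + t *\<^sub>R i)) has_vector_derivative g' x) (at 0))))"

end

theory Submission
  imports Defs
begin

text \<open>Write a point of G - Delta as (z1 + z2, z1 z2) with z1 \<noteq> z2. Near any such point the
  two roots can be chosen smoothly, by rotating the discriminant s^2 - 4p into the right half plane
  and taking its principal square root. In the coordinates z1 and w = phi_z1(z2) the map q is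
  simply |w|, so (Re z1, Im z1, Im (mu w), |w|), for a unit mu with Re (mu w) > 0, is a smooth chart
  in which q is the last coordinate. These charts straighten the level sets of q and make each
  leaf locally homeomorphic to an open subset of R^3; the smooth choice of roots provides local
  sections of the symmetrization F_a \<rightarrow> L_a, which is therefore a quotient map. Globally q is
  smooth by an explicit formula in s and p, and its derivative is surjective because q grows
  linearly along the curve that scales w.\<close>

section \<open>Smooth functions\<close>

definition partials_in :: "'a::euclidean_space set \<Rightarrow> ('a \<Rightarrow> 'b::real_normed_vector) set \<Rightarrow> ('a \<Rightarrow> 'b) \<Rightarrow> bool" where
  "partials_in S F g \<longleftrightarrow>
     (\<forall>i\<in>Basis. \<exists>g'\<in>F. \<forall>x\<in>S. ((\<lambda>t. g (x + t *\<^sub>R i)) has_vector_derivative g' x) (at 0))"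

definition smooth_family :: "'a::euclidean_space set \<Rightarrow> ('a \<Rightarrow> 'b::real_normed_vector) set \<Rightarrow> bool" where
  "smooth_family S F \<longleftrightarrow> (\<forall>g\<in>F. continuous_on S g \<and> partials_in S F g)"

lemma smooth_on_iff_family: "smooth_on S f \<longleftrightarrow> (\<exists>F. f \<in> F \<and> smooth_family S F)"
  by (auto simp: smooth_on_def smooth_family_def partials_in_def)

lemma smooth_onI_family: "f \<in> F \<Longrightarrow> smooth_family S F \<Longrightarrow> smooth_on S f"
  by (auto simp: smooth_on_iff_family)

lemma partials_in_mono: "partials_in S F g \<Longrightarrow> F \<subseteq> G \<Longrightarrow> partials_in S G g"
  unfolding partials_in_def by blast

lemma partials_in_cong:
  assumes S: "open S" and eq: "\<And>x. x \<in> S \<Longrightarrow> g x = f x" and f: "partials_in S F f"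
  shows "partials_in S F g"
  unfolding partials_in_def
proof
  fix i :: 'a assume "i \<in> Basis"
  with f obtain f' where f': "f' \<in> F" "\<forall>x\<in>S. ((\<lambda>t. f (x + t *\<^sub>R i)) has_vector_derivative f' x) (at 0)"
    unfolding partials_in_def by blast
  have "((\<lambda>t. g (x + t *\<^sub>R i)) has_vector_derivative f' x) (at 0)" if x: "x \<in> S" for x
  proof -
    have "open {t::real. x + t *\<^sub>R i \<in> S}"
      using open_vimage[OF S, of "\<lambda>t. x + t *\<^sub>R i"] by (simp add: vimage_def continuous_intros)
    then show ?thesis
      by (rule has_vector_derivative_transform_within_open[OF f'(2)[rule_format, OF x]]) (use x eq in auto)
  qed
  then show "\<exists>g'\<in>F. \<forall>x\<in>S. ((\<lambda>t. g (x + t *\<^sub>R i)) has_vector_derivative g' x) (at 0)"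
    using f'(1) by blast
qed

lemma partials_in_add:
  assumes "partials_in S F f" "partials_in S G g" "\<And>f' g'. f' \<in> F \<Longrightarrow> g' \<in> G \<Longrightarrow> (\<lambda>x. f' x + g' x) \<in> H"
  shows "partials_in S H (\<lambda>x. f x + g x)"
  unfolding partials_in_def
proof
  fix i :: 'a assume "i \<in> Basis"
  with assms(1,2) obtain f' g' where
    f': "f' \<in> F" "\<forall>x\<in>S. ((\<lambda>t. f (x + t *\<^sub>R i)) has_vector_derivative f' x) (at 0)" and
    g': "g' \<in> G" "\<forall>x\<in>S. ((\<lambda>t. g (x + t *\<^sub>R i)) has_vector_derivative g' x) (at 0)"
    unfolding partials_in_def by blast
  show "\<exists>h\<in>H. \<forall>x\<in>S. ((\<lambda>t. f (x + t *\<^sub>R i) + g (x + t *\<^sub>R i)) has_vector_derivative h x) (at 0)"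
  proof (rule bexI[of _ "\<lambda>x. f' x + g' x"])
    show "(\<lambda>x. f' x + g' x) \<in> H" using f'(1) g'(1) by (rule assms(3))
  qed (use f'(2) g'(2) in \<open>simp add: has_vector_derivative_add\<close>)
qed

lemma partials_in_mult:
  fixes f g :: "'a::euclidean_space \<Rightarrow> 'b::real_normed_algebra"
  assumes "partials_in S F f" "partials_in S F g"
    and "\<And>f' g'. f' \<in> F \<Longrightarrow> g' \<in> F \<Longrightarrow> (\<lambda>x. f x * g' x + f' x * g x) \<in> H"
  shows "partials_in S H (\<lambda>x. f x * g x)"
  unfolding partials_in_def
proof
  fix i :: 'a assume "i \<in> Basis"
  with assms(1,2) obtain f' g' where
    f': "f' \<in> F" "\<forall>x\<in>S. ((\<lambda>t. f (x + t *\<^sub>R i)) has_vector_derivative f' x) (at 0)" and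
    g': "g' \<in> F" "\<forall>x\<in>S. ((\<lambda>t. g (x + t *\<^sub>R i)) has_vector_derivative g' x) (at 0)"
    unfolding partials_in_def by blast
  show "\<exists>h\<in>H. \<forall>x\<in>S. ((\<lambda>t. f (x + t *\<^sub>R i) * g (x + t *\<^sub>R i)) has_vector_derivative h x) (at 0)"
  proof (rule bexI[of _ "\<lambda>x. f x * g' x + f' x * g x"], intro ballI)
    fix x assume "x \<in> S"
    from has_vector_derivative_mult[OF f'(2)[rule_format, OF this] g'(2)[rule_format, OF this]]
    show "((\<lambda>t. f (x + t *\<^sub>R i) * g (x + t *\<^sub>R i)) has_vector_derivative f x * g' x + f' x * g x) (at 0)"
      by simp
  qed (rule assms(3)[OF f'(1) g'(1)])
qed

lemma partials_in_bounded_linear: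
  fixes g :: "'a::euclidean_space \<Rightarrow> 'b::real_normed_vector" and L :: "'b \<Rightarrow> 'c::real_normed_vector"
  assumes L: "bounded_linear L" and g: "partials_in S F g" and LF: "\<And>g'. g' \<in> F \<Longrightarrow> (\<lambda>x. L (g' x)) \<in> H"
  shows "partials_in S H (\<lambda>x. L (g x))"
  unfolding partials_in_def
proof
  fix i :: 'a assume "i \<in> Basis"
  with g obtain g' where g': "g' \<in> F" "\<forall>x\<in>S. ((\<lambda>t. g (x + t *\<^sub>R i)) has_vector_derivative g' x) (at 0)"
    unfolding partials_in_def by blast
  show "\<exists>h\<in>H. \<forall>x\<in>S. ((\<lambda>t. L (g (x + t *\<^sub>R i))) has_vector_derivative h x) (at 0)"
    by (rule bexI[of _ "\<lambda>x. L (g' x)"]) (use g' LF in \<open>auto intro: bounded_linear.has_vector_derivative[OF L]\<close>)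
qed

lemma smooth_family_smooth_on: "smooth_family S {f. smooth_on S f}"
  unfolding smooth_family_def
proof safe
  fix g assume "smooth_on S g"
  then obtain F where F: "g \<in> F" "smooth_family S F" by (auto simp: smooth_on_iff_family)
  then have "F \<subseteq> {f. smooth_on S f}" by (auto intro: smooth_onI_family)
  with F show "continuous_on S g" "partials_in S {f. smooth_on S f} g"
    by (auto simp: smooth_family_def intro: partials_in_mono)
qed

lemma smooth_on_imp_continuous_on: "smooth_on S f \<Longrightarrow> continuous_on S f"
  and smooth_on_imp_partials_in: "smooth_on S f \<Longrightarrow> partials_in S {f. smooth_on S f} f"
  using smooth_family_smooth_on[of S] unfolding smooth_family_def by auto

lemma smooth_on_subset: "smooth_on S f \<Longrightarrow> T \<subseteq> S \<Longrightarrow> smooth_on T f"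
  unfolding smooth_on_def by (meson continuous_on_subset subsetD)

lemma smooth_on_cong:
  assumes S: "open S" and f: "smooth_on S f" and eq: "\<And>x. x \<in> S \<Longrightarrow> g x = f x"
  shows "smooth_on S g"
proof (rule smooth_onI_family)
  have "continuous_on S g"
    using continuous_on_eq[OF smooth_on_imp_continuous_on[OF f]] eq by metis
  moreover have "partials_in S {f. smooth_on S f} g"
    by (rule partials_in_cong[OF S eq smooth_on_imp_partials_in[OF f]])
  ultimately show "smooth_family S (insert g {f. smooth_on S f})"
    using smooth_family_smooth_on[of S]
    by (auto simp: smooth_family_def intro: partials_in_mono)
qed simp

inductive_set sum_prod_closure :: "('a \<Rightarrow> 'b::real_normed_algebra) set \<Rightarrow> ('a \<Rightarrow> 'b) set" for B where
  generator: "f \<in> B \<Longrightarrow> f \<in> sum_prod_closure B"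
| add: "f \<in> sum_prod_closure B \<Longrightarrow> g \<in> sum_prod_closure B \<Longrightarrow> (\<lambda>x. f x + g x) \<in> sum_prod_closure B"
| mult: "f \<in> sum_prod_closure B \<Longrightarrow> g \<in> sum_prod_closure B \<Longrightarrow> (\<lambda>x. f x * g x) \<in> sum_prod_closure B"

lemma smooth_family_sum_prod_closure:
  fixes B :: "('a::euclidean_space \<Rightarrow> 'b::real_normed_algebra) set"
  assumes "\<And>g. g \<in> B \<Longrightarrow> continuous_on S g \<and> partials_in S (sum_prod_closure B) g"
  shows "smooth_family S (sum_prod_closure B)"
  unfolding smooth_family_def
proof
  fix f assume "f \<in> sum_prod_closure B"
  then show "continuous_on S f \<and> partials_in S (sum_prod_closure B) f"
  proof induction
    case (add f g)
    then show ?case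
      by (auto intro: continuous_on_add partials_in_add sum_prod_closure.add)
  next
    case (mult f g)
    then show ?case
      by (intro conjI continuous_on_mult partials_in_mult)
         (auto intro: sum_prod_closure.add sum_prod_closure.mult)
  qed (use assms in blast)
qed

lemma smooth_on_mult:
  fixes f g :: "'a::euclidean_space \<Rightarrow> 'b::real_normed_algebra"
  assumes "smooth_on S f" "smooth_on S g"
  shows "smooth_on S (\<lambda>x. f x * g x)"
proof (rule smooth_onI_family)
  show "smooth_family S (sum_prod_closure {h :: 'a \<Rightarrow> 'b. smooth_on S h})"
    by (rule smooth_family_sum_prod_closure)
       (auto intro: smooth_on_imp_continuous_on partials_in_mono[OF smooth_on_imp_partials_in]
         sum_prod_closure.generator)
  show "(\<lambda>x. f x * g x) \<in> sum_prod_closure {h. smooth_on S h}"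
    using assms by (auto intro: sum_prod_closure.mult sum_prod_closure.generator)
qed

lemma smooth_on_add:
  fixes f g :: "'a::euclidean_space \<Rightarrow> 'b::real_normed_vector"
  assumes "smooth_on S f" "smooth_on S g"
  shows "smooth_on S (\<lambda>x. f x + g x)"
proof (rule smooth_onI_family)
  let ?F = "{f. smooth_on S f} \<union> {\<lambda>x. f x + g x | f g. smooth_on S f \<and> smooth_on S g}"
  show "smooth_family S ?F"
    unfolding smooth_family_def
  proof
    fix h assume "h \<in> ?F"
    then consider "smooth_on S h" | f g where "smooth_on S f" "smooth_on S g" "h = (\<lambda>x. f x + g x)"
      by blast
    then show "continuous_on S h \<and> partials_in S ?F h"
    proof cases
      case 1
      then show ?thesis by (auto intro: smooth_on_imp_continuous_on partials_in_mono[OF smooth_on_imp_partials_in])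
    next
      case 2
      have "partials_in S ?F (\<lambda>x. f x + g x)"
        by (rule partials_in_add[OF smooth_on_imp_partials_in[OF 2(1)] smooth_on_imp_partials_in[OF 2(2)]])
           blast
      moreover have "continuous_on S (\<lambda>x. f x + g x)"
        using 2 by (intro continuous_on_add smooth_on_imp_continuous_on)
      ultimately show ?thesis unfolding 2(3) by simp
    qed
  qed
qed (use assms in blast)

lemma smooth_on_const: "smooth_on (S::'a::euclidean_space set) (\<lambda>x. c)"
  by (rule smooth_onI_family[of _ "{\<lambda>x. c, \<lambda>x. 0}"]) (auto simp: smooth_family_def partials_in_def)

lemma smooth_on_bounded_linear:
  fixes L :: "'a::euclidean_space \<Rightarrow> 'b::real_normed_vector"
  assumes L: "bounded_linear L"
  shows "smooth_on S L"
proof (rule smooth_onI_family)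
  have "((\<lambda>t. L (x + t *\<^sub>R i)) has_vector_derivative L i) (at 0)" for x i
    by (rule bounded_linear.has_vector_derivative[OF L]) (auto intro!: derivative_eq_intros)
  then have "partials_in S (range (\<lambda>c x. c)) L"
    unfolding partials_in_def by (intro ballI bexI[of _ "\<lambda>x. L _"]) auto
  moreover have "partials_in S (range (\<lambda>c x. c)) (\<lambda>x. c)" for c :: 'b
    unfolding partials_in_def by (intro ballI bexI[of _ "\<lambda>x. 0"]) auto
  ultimately show "smooth_family S (insert L (range (\<lambda>c x. c)))"
    using linear_continuous_on[OF L] by (auto simp: smooth_family_def intro: partials_in_mono)
qed simp

lemma smooth_on_bounded_linear_comp:
  fixes f :: "'a::euclidean_space \<Rightarrow> 'b::real_normed_vector" and L :: "'b \<Rightarrow> 'c::real_normed_vector"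
  assumes L: "bounded_linear L" and f: "smooth_on S f"
  shows "smooth_on S (\<lambda>x. L (f x))"
proof (rule smooth_onI_family)
  let ?F = "{\<lambda>x. L (g x) | g. smooth_on S g}"
  show "smooth_family S ?F"
    unfolding smooth_family_def
  proof
    fix h assume "h \<in> ?F"
    then obtain g where g: "smooth_on S g" "h = (\<lambda>x. L (g x))" by auto
    have "continuous_on S (\<lambda>x. L (g x))"
      by (intro continuous_on_compose2[OF linear_continuous_on[OF L] smooth_on_imp_continuous_on[OF g(1)]]) auto
    moreover have "partials_in S ?F (\<lambda>x. L (g x))"
      by (rule partials_in_bounded_linear[OF L smooth_on_imp_partials_in[OF g(1)]]) auto
    ultimately show "continuous_on S h \<and> partials_in S ?F h" using g(2) by simp
  qed
qed (use f in blast)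

lemma smooth_on_compose_real:
  fixes f :: "'a::euclidean_space \<Rightarrow> real" and H :: "nat \<Rightarrow> real \<Rightarrow> real"
  assumes f: "smooth_on S f" and fT: "\<And>x. x \<in> S \<Longrightarrow> f x \<in> T"
    and H: "\<And>k y. y \<in> T \<Longrightarrow> (H k has_real_derivative H (Suc k) y) (at y)"
  shows "smooth_on S (\<lambda>x. H 0 (f x))"
proof (rule smooth_onI_family)
  let ?B = "{g. smooth_on S g} \<union> range (\<lambda>k x. H k (f x))"
  have smooth: "continuous_on S g \<and> partials_in S (sum_prod_closure ?B) g" if "smooth_on S g" for g
    using that by (auto intro: smooth_on_imp_continuous_on partials_in_mono[OF smooth_on_imp_partials_in]
        sum_prod_closure.generator)
  have "continuous_on S (\<lambda>x. H k (f x))" for k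
  proof -
    have "continuous_on T (H k)"
      using H DERIV_isCont continuous_at_imp_continuous_on by blast
    then show ?thesis using continuous_on_compose2 smooth_on_imp_continuous_on[OF f] fT by blast
  qed
  moreover have "partials_in S (sum_prod_closure ?B) (\<lambda>x. H k (f x))" for k
    unfolding partials_in_def
  proof
    fix i :: 'a assume i: "i \<in> Basis"
    obtain f' where f': "smooth_on S f'" "\<forall>x\<in>S. ((\<lambda>t. f (x + t *\<^sub>R i)) has_vector_derivative f' x) (at 0)"
      using smooth_on_imp_partials_in[OF f] i unfolding partials_in_def by blast
    show "\<exists>g'\<in>sum_prod_closure ?B. \<forall>x\<in>S. ((\<lambda>t. H k (f (x + t *\<^sub>R i))) has_vector_derivative g' x) (at 0)"
    proof (rule bexI[of _ "\<lambda>x. H (Suc k) (f x) * f' x"], intro ballI)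
      fix x assume x: "x \<in> S"
      have "((\<lambda>t. f (x + t *\<^sub>R i)) has_real_derivative f' x) (at 0)"
        using f'(2) x by (simp add: has_real_derivative_iff_has_vector_derivative)
      from DERIV_chain2[OF H[of "f (x + 0 *\<^sub>R i)"] this]
      show "((\<lambda>t. H k (f (x + t *\<^sub>R i))) has_vector_derivative H (Suc k) (f x) * f' x) (at 0)"
        using fT[OF x] by (simp add: has_real_derivative_iff_has_vector_derivative)
    qed (intro sum_prod_closure.mult sum_prod_closure.generator, use f'(1) in auto)
  qed
  ultimately show "smooth_family S (sum_prod_closure ?B)"
    using smooth by (intro smooth_family_sum_prod_closure) blast
qed (auto intro: sum_prod_closure.generator)

lemma smooth_on_powr:
  fixes f :: "'a::euclidean_space \<Rightarrow> real"
  assumes f: "smooth_on S f" and pos: "\<And>x. x \<in> S \<Longrightarrow> f x > 0"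
  shows "smooth_on S (\<lambda>x. f x powr a)"
proof -
  define H where "H k y = (\<Prod>j<k. a - real j) * y powr (a - real k)" for k y
  have "(H k has_real_derivative H (Suc k) y) (at y)" if "y \<in> {0<..}" for k y
  proof -
    have "((\<lambda>y. (\<Prod>j<k. a - real j) * y powr (a - real k)) has_real_derivative
        (\<Prod>j<k. a - real j) * ((a - real k) * y powr (a - real k - 1))) (at y)"
      using that by (intro DERIV_cmult has_real_derivative_powr) auto
    then show ?thesis unfolding H_def by (simp add: algebra_simps)
  qed
  then have "smooth_on S (\<lambda>x. H 0 (f x))"
    by (intro smooth_on_compose_real[where T = "{0<..}", OF f]) (use pos in auto)
  then show ?thesis by (simp add: H_def)
qed

lemma smooth_on_sqrt:
  fixes f :: "'a::euclidean_space \<Rightarrow> real"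
  assumes "open S" "smooth_on S f" "\<And>x. x \<in> S \<Longrightarrow> f x > 0"
  shows "smooth_on S (\<lambda>x. sqrt (f x))"
  by (rule smooth_on_cong[OF assms(1) smooth_on_powr[OF assms(2,3), of "1/2"]])
     (use assms(3) in \<open>auto simp: powr_half_sqrt less_imp_le abs_of_pos\<close>)

lemma smooth_on_inverse:
  fixes f :: "'a::euclidean_space \<Rightarrow> real"
  assumes "open S" "smooth_on S f" "\<And>x. x \<in> S \<Longrightarrow> f x > 0"
  shows "smooth_on S (\<lambda>x. inverse (f x))"
  by (rule smooth_on_cong[OF assms(1) smooth_on_powr[OF assms(2,3), of "-1"]])
     (use assms(3) in \<open>auto simp: powr_minus intro!: abs_of_pos[symmetric]\<close>)

lemma smooth_on_scaleR:
  fixes f :: "'a::euclidean_space \<Rightarrow> real"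
  shows "smooth_on S f \<Longrightarrow> smooth_on S (\<lambda>x. f x *\<^sub>R v)"
  by (rule smooth_on_bounded_linear_comp[OF bounded_linear_scaleR_left])

lemma smooth_on_uminus:
  fixes f :: "'a::euclidean_space \<Rightarrow> 'b::real_normed_vector"
  shows "smooth_on S f \<Longrightarrow> smooth_on S (\<lambda>x. - f x)"
  by (rule smooth_on_bounded_linear_comp[OF bounded_linear_minus[OF bounded_linear_ident]])

lemma smooth_on_diff:
  fixes f g :: "'a::euclidean_space \<Rightarrow> 'b::real_normed_vector"
  assumes "smooth_on S f" "smooth_on S g"
  shows "smooth_on S (\<lambda>x. f x - g x)"
  using smooth_on_add[OF assms(1) smooth_on_uminus[OF assms(2)]] by simp

lemma smooth_on_power:
  fixes f :: "'a::euclidean_space \<Rightarrow> 'b::{real_normed_algebra,monoid_mult}"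
  shows "smooth_on S f \<Longrightarrow> smooth_on S (\<lambda>x. f x ^ n)"
  by (induction n) (auto intro!: smooth_on_mult smooth_on_const)

lemma smooth_on_id: "smooth_on S (\<lambda>x. x)"
  by (rule smooth_on_bounded_linear[OF bounded_linear_ident])

lemma smooth_on_Re: "smooth_on S f \<Longrightarrow> smooth_on S (\<lambda>x. Re (f x))"
  by (rule smooth_on_bounded_linear_comp[OF bounded_linear_Re])

lemma smooth_on_Im: "smooth_on S f \<Longrightarrow> smooth_on S (\<lambda>x. Im (f x))"
  by (rule smooth_on_bounded_linear_comp[OF bounded_linear_Im])

lemma smooth_on_cnj: "smooth_on S f \<Longrightarrow> smooth_on S (\<lambda>x. cnj (f x))"
  by (rule smooth_on_bounded_linear_comp[OF bounded_linear_cnj])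

lemma smooth_on_of_real: "smooth_on S f \<Longrightarrow> smooth_on S (\<lambda>x. complex_of_real (f x))"
  by (rule smooth_on_bounded_linear_comp[OF bounded_linear_of_real])

lemma smooth_on_fst: "smooth_on S f \<Longrightarrow> smooth_on S (\<lambda>x. fst (f x))"
  by (rule smooth_on_bounded_linear_comp[OF bounded_linear_fst])

lemma smooth_on_snd: "smooth_on S f \<Longrightarrow> smooth_on S (\<lambda>x. snd (f x))"
  by (rule smooth_on_bounded_linear_comp[OF bounded_linear_snd])

lemma smooth_on_vec_nth: "smooth_on S f \<Longrightarrow> smooth_on S (\<lambda>x. f x $ i)"
  by (rule smooth_on_bounded_linear_comp[OF bounded_linear_vec_nth])

lemma smooth_on_Pair:
  fixes f :: "'a::euclidean_space \<Rightarrow> 'b::real_normed_vector" and g :: "'a \<Rightarrow> 'c::real_normed_vector"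
  assumes "smooth_on S f" "smooth_on S g"
  shows "smooth_on S (\<lambda>x. (f x, g x))"
proof -
  have "smooth_on S (\<lambda>x. (f x, 0) + (0, g x))"
    by (intro smooth_on_add smooth_on_bounded_linear_comp[OF _ assms(1)]
        smooth_on_bounded_linear_comp[OF _ assms(2)])
       (auto intro: bounded_linear_Pair bounded_linear_ident bounded_linear_zero)
  then show ?thesis by simp
qed

lemma smooth_on_Complex:
  assumes "smooth_on S f" "smooth_on S g"
  shows "smooth_on S (\<lambda>x. Complex (f x) (g x))"
proof -
  have "smooth_on S (\<lambda>x. complex_of_real (f x) + \<i> * complex_of_real (g x))"
    by (intro smooth_on_add smooth_on_mult smooth_on_of_real assms smooth_on_const)
  then show ?thesis by (simp add: Complex_eq)
qed

lemma smooth_on_vector3: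
  assumes "smooth_on S f" "smooth_on S g" "smooth_on S h"
  shows "smooth_on S (\<lambda>x. vector [f x, g x, h x] :: real^3)"
proof -
  have "(vector [a, b, c] :: real^3) = a *\<^sub>R axis 1 1 + b *\<^sub>R axis 2 1 + c *\<^sub>R axis 3 1" for a b c
    by (simp add: vec_eq_iff forall_3 axis_def)
  then show ?thesis by (simp only:) (intro smooth_on_add smooth_on_scaleR assms)
qed

lemma smooth_on_cmod_power2:
  "smooth_on S f \<Longrightarrow> smooth_on S (\<lambda>x. (cmod (f x))\<^sup>2)"
  unfolding cmod_power2 by (intro smooth_on_add smooth_on_power smooth_on_Re smooth_on_Im)

lemma smooth_on_cmod:
  assumes "open S" "smooth_on S f" "\<And>x. x \<in> S \<Longrightarrow> f x \<noteq> 0"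
  shows "smooth_on S (\<lambda>x. cmod (f x))"
proof -
  have "smooth_on S (\<lambda>x. sqrt ((cmod (f x))\<^sup>2))"
    using assms(3) by (intro smooth_on_sqrt assms(1) smooth_on_cmod_power2 assms(2)) simp
  then show ?thesis by simp
qed

lemma smooth_on_cinverse:
  fixes f :: "'a::euclidean_space \<Rightarrow> complex"
  assumes "open S" "smooth_on S f" "\<And>x. x \<in> S \<Longrightarrow> f x \<noteq> 0"
  shows "smooth_on S (\<lambda>x. inverse (f x))"
proof -
  have inverse_eq: "inverse z = cnj z * complex_of_real (inverse ((cmod z)\<^sup>2))" for z
  proof -
    have "inverse z = 1 / z" by (simp add: inverse_eq_divide)
    also have "\<dots> = cnj z / complex_of_real ((cmod z)\<^sup>2)" by (subst complex_div_cnj) simp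
    finally show ?thesis by (simp add: divide_inverse)
  qed
  show ?thesis
    unfolding inverse_eq
    by (intro smooth_on_mult smooth_on_cnj smooth_on_of_real smooth_on_inverse smooth_on_cmod_power2 assms(1,2))
       (use assms(3) in simp)
qed

lemma smooth_on_divide:
  assumes "open S" "smooth_on S f" "smooth_on S g" "\<And>x. x \<in> S \<Longrightarrow> g x \<noteq> 0"
  shows "smooth_on S (\<lambda>x. f x / g x :: complex)"
  unfolding divide_inverse by (intro smooth_on_mult smooth_on_cinverse assms)

section \<open>Moebius maps and the symmetrized bidisc\<close>

lemma mem_unit_disc: "z \<in> unit_disc \<longleftrightarrow> cmod z < 1"
  by (simp add: unit_disc_def)

lemma moeb_denominator_identity:
  "(cmod (1 - cnj a * w))\<^sup>2 - (cmod (a - w))\<^sup>2 = (1 - (cmod a)\<^sup>2) * (1 - (cmod w)\<^sup>2)"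
  unfolding cmod_power2 by (simp add: algebra_simps power2_eq_square)

lemma moeb_denominator_nonzero:
  assumes "cmod a < 1" "cmod w < 1"
  shows "1 - cnj a * w \<noteq> 0"
proof
  assume "1 - cnj a * w = 0"
  then have "cmod a * cmod w = 1" by (metis complex_mod_cnj eq_iff_diff_eq_0 norm_mult norm_one)
  moreover have "cmod a * cmod w < 1"
    using assms by (metis mult_strict_mono' norm_ge_zero mult_1_left)
  ultimately show False by simp
qed

lemma norm_moeb_less_1:
  assumes "cmod a < 1" "cmod w < 1"
  shows "cmod (moeb a w) < 1"
proof -
  have "0 < (1 - (cmod a)\<^sup>2) * (1 - (cmod w)\<^sup>2)"
    using assms by (simp add: abs_square_less_1)
  then have "(cmod (a - w))\<^sup>2 < (cmod (1 - cnj a * w))\<^sup>2"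
    using moeb_denominator_identity[of a w] by linarith
  then have "cmod (a - w) < cmod (1 - cnj a * w)"
    by (meson norm_ge_zero power2_less_imp_less)
  then show ?thesis
    using moeb_denominator_nonzero[OF assms] by (simp add: moeb_def norm_divide divide_less_eq)
qed

lemma moeb_moeb:
  assumes "cmod a < 1" "cmod w < 1"
  shows "moeb a (moeb a w) = w"
proof -
  have d: "1 - cnj a * w \<noteq> 0" "1 - cnj a * a \<noteq> 0"
    using moeb_denominator_nonzero assms by blast+
  have "a - moeb a w = w * (1 - cnj a * a) / (1 - cnj a * w)"
    and "1 - cnj a * moeb a w = (1 - cnj a * a) / (1 - cnj a * w)"
    unfolding moeb_def using d by (simp_all add: field_simps)
  then show ?thesis using d by (simp add: moeb_def[of a "moeb a w"])
qed

lemma moeb_eq_0_iff: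
  assumes "cmod a < 1" "cmod w < 1"
  shows "moeb a w = 0 \<longleftrightarrow> a = w"
  using moeb_denominator_nonzero[OF assms] by (simp add: moeb_def)

lemma norm_moeb_commute: "cmod (moeb a b) = cmod (moeb b a)"
proof -
  have "cmod (1 - cnj a * b) = cmod (1 - cnj b * a)"
    by (metis complex_cnj_cnj complex_cnj_diff complex_cnj_mult complex_cnj_one complex_mod_cnj mult.commute)
  then show ?thesis by (simp add: moeb_def norm_divide norm_minus_commute)
qed

lemma sum_product_eq_imp:
  fixes a b c d :: "'a::idom"
  assumes "a + b = c + d" "a * b = c * d"
  shows "(c = a \<and> d = b) \<or> (c = b \<and> d = a)"
proof -
  have "(c - a) * (c - b) = c * c - c * (a + b) + a * b" by (simp add: algebra_simps)
  also have "\<dots> = 0" using assms by (simp add: algebra_simps)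
  finally have "(c - a) * (c - b) = 0" .
  then show ?thesis using assms by auto
qed

lemma qmap_sum_prod:
  assumes "z1 \<in> unit_disc" "z2 \<in> unit_disc"
  shows "qmap (z1 + z2, z1 * z2) = cmod (moeb z1 z2)"
  unfolding qmap_def
proof (rule the_equality)
  fix a assume "\<exists>w1 w2. w1 \<in> unit_disc \<and> w2 \<in> unit_disc \<and> (z1 + z2, z1 * z2) = (w1 + w2, w1 * w2) \<and>
      a = cmod (moeb w1 w2)"
  then obtain w1 w2 where "z1 + z2 = w1 + w2" "z1 * z2 = w1 * w2" "a = cmod (moeb w1 w2)" by auto
  then show "a = cmod (moeb z1 z2)" using sum_product_eq_imp norm_moeb_commute by metis
qed (use assms in blast)

lemma sum_prod_mem_royal_iff:
  assumes "z1 \<in> unit_disc"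
  shows "(z1 + z2, z1 * z2) \<in> royal \<longleftrightarrow> z1 = z2"
proof
  assume "(z1 + z2, z1 * z2) \<in> royal"
  then obtain z where z: "z1 + z2 = 2 * z" "z1 * z2 = z ^ 2" by (auto simp: royal_def)
  have "(z1 - z2)^2 = (z1 + z2)^2 - 4 * (z1 * z2)" by (simp add: power2_eq_square algebra_simps)
  also have "\<dots> = 0" using z by (simp add: power2_eq_square algebra_simps)
  finally show "z1 = z2" by simp
qed (use assms in \<open>auto simp: royal_def power2_eq_square\<close>)

lemma mem_symG_minus_royal:
  "x \<in> symG - royal \<longleftrightarrow>
     (\<exists>z1 z2. z1 \<in> unit_disc \<and> z2 \<in> unit_disc \<and> z1 \<noteq> z2 \<and> x = (z1 + z2, z1 * z2))"
  unfolding symG_def using sum_prod_mem_royal_iff by auto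

lemma qmap_image: "qmap ` (symG - royal) = {0<..<1}"
proof
  show "qmap ` (symG - royal) \<subseteq> {0<..<1}"
  proof
    fix a assume "a \<in> qmap ` (symG - royal)"
    then obtain x where "x \<in> symG - royal" "a = qmap x" by blast
    then obtain z1 z2 where z: "z1 \<in> unit_disc" "z2 \<in> unit_disc" "z1 \<noteq> z2" "a = qmap (z1 + z2, z1 * z2)"
      unfolding mem_symG_minus_royal by blast
    then have "cmod z1 < 1" "cmod z2 < 1" by (auto simp: mem_unit_disc)
    then show "a \<in> {0<..<1}"
      using z norm_moeb_less_1 moeb_eq_0_iff qmap_sum_prod by simp
  qed
  show "{0<..<1} \<subseteq> qmap ` (symG - royal)"
  proof
    fix a :: real assume a: "a \<in> {0<..<1}"
    then have "(0 + of_real a, 0 * of_real a) \<in> symG - royal"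
      unfolding mem_symG_minus_royal by (intro exI[of _ 0] exI[of _ "of_real a"]) (simp add: mem_unit_disc)
    moreover have "qmap (0 + of_real a, 0 * of_real a) = a"
      using a by (subst qmap_sum_prod) (auto simp: mem_unit_disc moeb_def)
    ultimately show "a \<in> qmap ` (symG - royal)" by (metis image_eqI)
  qed
qed

section \<open>Smooth choice of the two roots\<close>

lemma csqrt_eq_Complex:
  assumes "Re w > 0"
  defines "x \<equiv> sqrt ((cmod w + Re w) / 2)"
  shows "csqrt w = Complex x (Im w / (2 * x))"
proof (rule csqrt_unique)
  have m: "(cmod w)\<^sup>2 = (Re w)\<^sup>2 + (Im w)\<^sup>2" by (rule cmod_power2)
  have mpos: "cmod w + Re w > 0" using assms(1) complex_Re_le_cmod[of w] by linarith
  then have x: "x > 0" and x2: "x\<^sup>2 = (cmod w + Re w) / 2" by (simp_all add: x_def)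
  have "x\<^sup>2 - (Im w / (2 * x))\<^sup>2 = x\<^sup>2 - (Im w)\<^sup>2 / (4 * x\<^sup>2)"
    by (simp add: power_divide power_mult_distrib)
  also have "\<dots> = (cmod w + Re w) / 2 - (Im w)\<^sup>2 / (2 * (cmod w + Re w))"
    using mpos by (simp add: x2 field_simps)
  also have "\<dots> = ((cmod w + Re w)\<^sup>2 - (Im w)\<^sup>2) / (2 * (cmod w + Re w))"
    using mpos by (simp add: field_simps power2_eq_square)
  also have "(cmod w + Re w)\<^sup>2 - (Im w)\<^sup>2 = 2 * Re w * (cmod w + Re w)"
    using m by (simp add: power2_eq_square algebra_simps)
  also have "2 * Re w * (cmod w + Re w) / (2 * (cmod w + Re w)) = Re w"
    using mpos by (simp add: field_simps)
  finally have "x\<^sup>2 - (Im w / (2 * x))\<^sup>2 = Re w" .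
  moreover have "2 * x * (Im w / (2 * x)) = Im w" using x by simp
  ultimately show "(Complex x (Im w / (2 * x)))\<^sup>2 = w"
    using x by (simp add: complex_eq_iff power2_eq_square)
  show "0 < Re (Complex x (Im w / (2 * x))) \<or> Re (Complex x (Im w / (2 * x))) = 0 \<and> 0 \<le> Im (Complex x (Im w / (2 * x)))"
    using x by simp
qed

lemma smooth_on_csqrt:
  fixes g :: "'a::euclidean_space \<Rightarrow> complex"
  assumes S: "open S" and g: "smooth_on S g" and pos: "\<And>x. x \<in> S \<Longrightarrow> Re (g x) > 0"
  shows "smooth_on S (\<lambda>x. csqrt (g x))"
proof (rule smooth_on_cong[OF S])
  have nz: "g x \<noteq> 0" if "x \<in> S" for x using pos[OF that] by auto
  have mpos: "cmod (g x) + Re (g x) > 0" if "x \<in> S" for x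
    using pos[OF that] complex_Re_le_cmod[of "g x"] by linarith
  have x: "smooth_on S (\<lambda>x. sqrt ((cmod (g x) + Re (g x)) / 2))"
    unfolding divide_inverse
    by (intro smooth_on_sqrt S smooth_on_mult smooth_on_add smooth_on_cmod smooth_on_Re g nz smooth_on_const)
       (use mpos in auto)
  show "smooth_on S (\<lambda>x. Complex (sqrt ((cmod (g x) + Re (g x)) / 2))
          (Im (g x) / (2 * sqrt ((cmod (g x) + Re (g x)) / 2))))"
    unfolding divide_inverse[of "Im _"]
    by (intro smooth_on_Complex x smooth_on_mult smooth_on_Im g smooth_on_inverse S smooth_on_const)
       (use mpos in auto)
qed (use pos in \<open>simp add: csqrt_eq_Complex\<close>)

lemma open_Collect_preimage:
  "open S \<Longrightarrow> continuous_on S f \<Longrightarrow> open T \<Longrightarrow> open {x \<in> S. f x \<in> T}"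
  using continuous_open_preimage[of S f T] by (simp add: Int_def vimage_def)

definition discr :: "complex \<times> complex \<Rightarrow> complex" where
  "discr u = (fst u)\<^sup>2 - 4 * snd u"

text \<open>The roots of z^2 - s z + p, for u = (s, p), chosen by the unit factor \<nu> that turns
  the discriminant into the right half plane, where the principal square root is smooth.\<close>

definition root1 :: "complex \<Rightarrow> complex \<times> complex \<Rightarrow> complex" where
  "root1 \<nu> u = (fst u + cnj \<nu> * csqrt (\<nu>\<^sup>2 * discr u)) / 2"

definition root2 :: "complex \<Rightarrow> complex \<times> complex \<Rightarrow> complex" where
  "root2 \<nu> u = (fst u - cnj \<nu> * csqrt (\<nu>\<^sup>2 * discr u)) / 2"

definition discr_half_plane :: "complex \<Rightarrow> (complex \<times> complex) set" where
  "discr_half_plane \<nu> = {u. 0 < Re (\<nu>\<^sup>2 * discr u)}"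

definition root_domain :: "complex \<Rightarrow> (complex \<times> complex) set" where
  "root_domain \<nu> = {u \<in> discr_half_plane \<nu>. (root1 \<nu> u, root2 \<nu> u) \<in> unit_disc \<times> unit_disc}"

lemma smooth_on_discr: "smooth_on S discr"
  unfolding discr_def[abs_def]
  by (intro smooth_on_diff smooth_on_power smooth_on_mult smooth_on_const smooth_on_fst smooth_on_snd smooth_on_id)

lemma open_discr_half_plane: "open (discr_half_plane \<nu>)"
proof -
  have "continuous_on UNIV (\<lambda>u. Re (\<nu>\<^sup>2 * discr u))"
    by (intro smooth_on_imp_continuous_on smooth_on_Re smooth_on_mult smooth_on_const smooth_on_discr)
  from open_Collect_preimage[OF open_UNIV this open_greaterThan[of 0]]
  show ?thesis by (simp add: discr_half_plane_def)
qed

lemma smooth_on_roots: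
  "smooth_on (discr_half_plane \<nu>) (root1 \<nu>)" "smooth_on (discr_half_plane \<nu>) (root2 \<nu>)"
proof -
  have "smooth_on (discr_half_plane \<nu>) (\<lambda>u. csqrt (\<nu>\<^sup>2 * discr u))"
    by (intro smooth_on_csqrt open_discr_half_plane smooth_on_mult smooth_on_const smooth_on_discr)
       (simp add: discr_half_plane_def)
  then show "smooth_on (discr_half_plane \<nu>) (root1 \<nu>)" "smooth_on (discr_half_plane \<nu>) (root2 \<nu>)"
    unfolding root1_def[abs_def] root2_def[abs_def] divide_inverse
    by (intro smooth_on_mult smooth_on_add smooth_on_diff smooth_on_fst smooth_on_id smooth_on_const; assumption)+
qed

lemma open_root_domain: "open (root_domain \<nu>)"
  unfolding root_domain_def
  by (intro open_Collect_preimage open_discr_half_plane open_Times smooth_on_imp_continuous_on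
      smooth_on_Pair smooth_on_roots) (simp_all add: unit_disc_def)

lemma sum_prod_roots:
  assumes \<nu>: "cmod \<nu> = 1" and u: "u \<in> discr_half_plane \<nu>"
  shows "u = (root1 \<nu> u + root2 \<nu> u, root1 \<nu> u * root2 \<nu> u)" "root1 \<nu> u \<noteq> root2 \<nu> u"
proof -
  define r where "r = csqrt (\<nu>\<^sup>2 * discr u)"
  have "r \<noteq> 0" using u by (auto simp: r_def discr_half_plane_def)
  have "(cnj \<nu> * r)\<^sup>2 = (cnj \<nu> * \<nu>)\<^sup>2 * discr u"
    by (simp add: r_def power_mult_distrib)
  also have "cnj \<nu> * \<nu> = 1" using \<nu> by (simp add: complex_norm_square[symmetric] mult.commute)
  finally have r2: "(cnj \<nu> * r)\<^sup>2 = discr u" by simp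
  have z1: "root1 \<nu> u = (fst u + cnj \<nu> * r) / 2" and z2: "root2 \<nu> u = (fst u - cnj \<nu> * r) / 2"
    by (simp_all add: root1_def root2_def r_def)
  have "root1 \<nu> u * root2 \<nu> u = ((fst u)\<^sup>2 - (cnj \<nu> * r)\<^sup>2) / 4"
    unfolding z1 z2 by (simp add: power2_eq_square algebra_simps)
  then have "root1 \<nu> u * root2 \<nu> u = snd u" by (simp add: r2 discr_def)
  moreover have "root1 \<nu> u + root2 \<nu> u = fst u"
    unfolding z1 z2 by (simp add: field_simps)
  ultimately show "u = (root1 \<nu> u + root2 \<nu> u, root1 \<nu> u * root2 \<nu> u)" by simp
  show "root1 \<nu> u \<noteq> root2 \<nu> u"
    using \<open>r \<noteq> 0\<close> \<nu> unfolding z1 z2 by (auto simp: field_simps)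
qed

lemma roots_of_sum_prod:
  assumes \<nu>: "cmod \<nu> = 1" and sector: "\<bar>Im (\<nu> * (z1 - z2))\<bar> < Re (\<nu> * (z1 - z2))"
  shows "(z1 + z2, z1 * z2) \<in> discr_half_plane \<nu>"
    "root1 \<nu> (z1 + z2, z1 * z2) = z1" "root2 \<nu> (z1 + z2, z1 * z2) = z2"
proof -
  define c where "c = \<nu> * (z1 - z2)"
  have discr: "\<nu>\<^sup>2 * discr (z1 + z2, z1 * z2) = c\<^sup>2"
    by (simp add: discr_def c_def power2_eq_square algebra_simps)
  have "\<bar>Im c\<bar>\<^sup>2 < (Re c)\<^sup>2"
    using sector unfolding c_def[symmetric] by (intro power_strict_mono) auto
  then have "0 < Re (c\<^sup>2)" by (simp add: power2_eq_square)
  then show "(z1 + z2, z1 * z2) \<in> discr_half_plane \<nu>"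
    unfolding discr_half_plane_def mem_Collect_eq discr .
  have "csqrt (\<nu>\<^sup>2 * discr (z1 + z2, z1 * z2)) = c"
    unfolding discr using sector by (intro csqrt_unique) (auto simp: c_def)
  moreover have "cnj \<nu> * c = z1 - z2"
    using \<nu> by (simp add: c_def mult.assoc[symmetric] complex_norm_square[symmetric] mult.commute)
  ultimately show "root1 \<nu> (z1 + z2, z1 * z2) = z1" "root2 \<nu> (z1 + z2, z1 * z2) = z2"
    by (simp_all add: root1_def root2_def field_simps)
qed

lemma root_domain_subset:
  assumes "cmod \<nu> = 1"
  shows "root_domain \<nu> \<subseteq> symG - royal"
proof
  fix u assume "u \<in> root_domain \<nu>"
  then have "u \<in> discr_half_plane \<nu>" "root1 \<nu> u \<in> unit_disc" "root2 \<nu> u \<in> unit_disc"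
    by (auto simp: root_domain_def)
  then show "u \<in> symG - royal"
    using sum_prod_roots[OF assms] unfolding mem_symG_minus_royal by blast
qed

lemma qmap_root_domain:
  "cmod \<nu> = 1 \<Longrightarrow> u \<in> root_domain \<nu> \<Longrightarrow> qmap u = cmod (moeb (root1 \<nu> u) (root2 \<nu> u))"
  using sum_prod_roots[of \<nu> u] qmap_sum_prod[of "root1 \<nu> u" "root2 \<nu> u"] by (simp add: root_domain_def)

section \<open>Foliation charts\<close>

definition root_moeb :: "complex \<Rightarrow> complex \<times> complex \<Rightarrow> complex" where
  "root_moeb \<nu> u = moeb (root1 \<nu> u) (root2 \<nu> u)"

text \<open>The chart records z1 and, of w = moeb z1 z2, only Im (\<mu> w) and the last coordinate
  cmod w = q; this determines w as long as Re (\<mu> w) > 0.\<close>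

definition chart_domain :: "complex \<Rightarrow> complex \<Rightarrow> (complex \<times> complex) set" where
  "chart_domain \<nu> \<mu> = {u \<in> root_domain \<nu>. 0 < Re (\<mu> * root_moeb \<nu> u)}"

definition chart :: "complex \<Rightarrow> complex \<Rightarrow> complex \<times> complex \<Rightarrow> (real^3) \<times> real" where
  "chart \<nu> \<mu> u = (vector [Re (root1 \<nu> u), Im (root1 \<nu> u), Im (\<mu> * root_moeb \<nu> u)], cmod (root_moeb \<nu> u))"

definition chart_z :: "(real^3) \<times> real \<Rightarrow> complex" where
  "chart_z v = Complex (fst v $ 1) (fst v $ 2)"

definition chart_w :: "complex \<Rightarrow> (real^3) \<times> real \<Rightarrow> complex" where
  "chart_w \<mu> v = cnj \<mu> * Complex (sqrt ((snd v)\<^sup>2 - (fst v $ 3)\<^sup>2)) (fst v $ 3)"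

definition chart_inv :: "complex \<Rightarrow> (real^3) \<times> real \<Rightarrow> complex \<times> complex" where
  "chart_inv \<mu> v = symm (chart_z v, moeb (chart_z v) (chart_w \<mu> v))"

definition chart_inv_domain :: "((real^3) \<times> real) set" where
  "chart_inv_domain = {v. cmod (chart_z v) < 1 \<and> \<bar>fst v $ 3\<bar> < snd v \<and> snd v < 1}"

text \<open>The condition on d = \<nu>(z1 - z2) is what lets root1 and root2 recover z1 and z2.\<close>

definition chart_range :: "complex \<Rightarrow> complex \<Rightarrow> ((real^3) \<times> real) set" where
  "chart_range \<nu> \<mu> = {v \<in> chart_inv_domain.
     let d = \<nu> * (chart_z v - moeb (chart_z v) (chart_w \<mu> v)) in \<bar>Im d\<bar> < Re d}"

lemma smooth_on_root_moeb: "smooth_on (root_domain \<nu>) (root_moeb \<nu>)"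
proof -
  have "root_domain \<nu> \<subseteq> discr_half_plane \<nu>" by (auto simp: root_domain_def)
  then have roots: "smooth_on (root_domain \<nu>) (root1 \<nu>)" "smooth_on (root_domain \<nu>) (root2 \<nu>)"
    using smooth_on_roots smooth_on_subset by blast+
  have "1 - cnj (root1 \<nu> u) * root2 \<nu> u \<noteq> 0" if "u \<in> root_domain \<nu>" for u
    using that by (intro moeb_denominator_nonzero) (auto simp: root_domain_def mem_unit_disc)
  then show ?thesis
    unfolding root_moeb_def[abs_def] moeb_def
    by (intro smooth_on_divide open_root_domain smooth_on_diff smooth_on_mult smooth_on_cnj roots smooth_on_const)
qed

lemma open_chart_domain: "open (chart_domain \<nu> \<mu>)"
proof -
  have "continuous_on (root_domain \<nu>) (\<lambda>u. Re (\<mu> * root_moeb \<nu> u))"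
    by (intro smooth_on_imp_continuous_on smooth_on_Re smooth_on_mult smooth_on_const smooth_on_root_moeb)
  from open_Collect_preimage[OF open_root_domain this open_greaterThan[of 0]]
  show ?thesis by (simp add: chart_domain_def)
qed

lemma smooth_on_chart: "smooth_on (chart_domain \<nu> \<mu>) (chart \<nu> \<mu>)"
proof -
  have sub: "chart_domain \<nu> \<mu> \<subseteq> root_domain \<nu>" "chart_domain \<nu> \<mu> \<subseteq> discr_half_plane \<nu>"
    by (auto simp: chart_domain_def root_domain_def)
  have "smooth_on (chart_domain \<nu> \<mu>) (root1 \<nu>)" "smooth_on (chart_domain \<nu> \<mu>) (root_moeb \<nu>)"
    using smooth_on_subset[OF smooth_on_roots(1) sub(2)] smooth_on_subset[OF smooth_on_root_moeb sub(1)] .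
  moreover have "root_moeb \<nu> u \<noteq> 0" if "u \<in> chart_domain \<nu> \<mu>" for u
    using that by (auto simp: chart_domain_def)
  ultimately show ?thesis
    unfolding chart_def[abs_def]
    by (intro smooth_on_Pair smooth_on_vector3 smooth_on_Re smooth_on_Im smooth_on_mult smooth_on_const
        smooth_on_cmod open_chart_domain) auto
qed

lemma smooth_on_chart_z: "smooth_on S chart_z"
  unfolding chart_z_def[abs_def] by (intro smooth_on_Complex smooth_on_vec_nth smooth_on_fst smooth_on_id)

lemma open_chart_inv_domain: "open chart_inv_domain"
proof -
  have "continuous_on UNIV chart_z" by (rule smooth_on_imp_continuous_on[OF smooth_on_chart_z])
  then show ?thesis
    unfolding chart_inv_domain_def
    by (intro open_Collect_conj open_Collect_less) (auto intro!: continuous_intros)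
qed

lemma norm_chart_w:
  assumes "cmod \<mu> = 1" "\<bar>fst v $ 3\<bar> < snd v"
  shows "cmod (chart_w \<mu> v) = snd v"
proof -
  have "\<bar>fst v $ 3\<bar>\<^sup>2 < (snd v)\<^sup>2" using assms(2) by (intro power_strict_mono) auto
  have "cmod (chart_w \<mu> v) = cmod (Complex (sqrt ((snd v)\<^sup>2 - (fst v $ 3)\<^sup>2)) (fst v $ 3))"
    using assms(1) by (simp add: chart_w_def norm_mult)
  also have "\<dots> = sqrt ((snd v)\<^sup>2)"
    using \<open>\<bar>fst v $ 3\<bar>\<^sup>2 < (snd v)\<^sup>2\<close> by (simp add: cmod_def)
  finally show ?thesis using assms(2) by simp
qed

lemma smooth_on_chart_moeb:
  assumes \<mu>: "cmod \<mu> = 1"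
  shows "smooth_on chart_inv_domain (\<lambda>v. moeb (chart_z v) (chart_w \<mu> v))"
proof -
  have "\<bar>fst v $ 3\<bar>\<^sup>2 < (snd v)\<^sup>2" if "v \<in> chart_inv_domain" for v
    using that by (intro power_strict_mono) (auto simp: chart_inv_domain_def)
  then have w: "smooth_on chart_inv_domain (chart_w \<mu>)"
    unfolding chart_w_def[abs_def]
    by (intro smooth_on_mult smooth_on_const smooth_on_Complex smooth_on_sqrt open_chart_inv_domain smooth_on_diff
        smooth_on_power smooth_on_vec_nth smooth_on_fst smooth_on_snd smooth_on_id) auto
  have "1 - cnj (chart_z v) * chart_w \<mu> v \<noteq> 0" if "v \<in> chart_inv_domain" for v
    using that by (intro moeb_denominator_nonzero) (auto simp: chart_inv_domain_def norm_chart_w \<mu>)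
  then show ?thesis
    unfolding moeb_def
    by (intro smooth_on_divide open_chart_inv_domain smooth_on_diff smooth_on_mult smooth_on_cnj smooth_on_chart_z
        w smooth_on_const)
qed

lemma smooth_on_chart_inv: "cmod \<mu> = 1 \<Longrightarrow> smooth_on chart_inv_domain (chart_inv \<mu>)"
  unfolding chart_inv_def[abs_def] symm_def fst_conv snd_conv
  by (intro smooth_on_Pair smooth_on_add smooth_on_mult smooth_on_chart_z smooth_on_chart_moeb)

lemma open_chart_range: "cmod \<mu> = 1 \<Longrightarrow> open (chart_range \<nu> \<mu>)"
proof -
  assume \<mu>: "cmod \<mu> = 1"
  have "continuous_on chart_inv_domain (\<lambda>v. \<nu> * (chart_z v - moeb (chart_z v) (chart_w \<mu> v)))"
    by (intro smooth_on_imp_continuous_on smooth_on_mult smooth_on_const smooth_on_diff smooth_on_chart_z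
        smooth_on_chart_moeb \<mu>)
  from open_Collect_preimage[OF open_chart_inv_domain this, of "{d. \<bar>Im d\<bar> < Re d}"]
  show ?thesis
    unfolding chart_range_def Let_def
    by (simp add: open_Collect_less continuous_intros)
qed

lemma chart_inv_chart:
  assumes \<nu>: "cmod \<nu> = 1" and \<mu>: "cmod \<mu> = 1" and u: "u \<in> chart_domain \<nu> \<mu>"
  shows "chart_z (chart \<nu> \<mu> u) = root1 \<nu> u" "chart_w \<mu> (chart \<nu> \<mu> u) = root_moeb \<nu> u"
    "chart_inv \<mu> (chart \<nu> \<mu> u) = u"
proof -
  have u2: "u \<in> root_domain \<nu>" and pos: "0 < Re (\<mu> * root_moeb \<nu> u)"
    using u by (auto simp: chart_domain_def)
  show z: "chart_z (chart \<nu> \<mu> u) = root1 \<nu> u" by (simp add: chart_z_def chart_def vector_3)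
  have "(cmod (root_moeb \<nu> u))\<^sup>2 = (cmod (\<mu> * root_moeb \<nu> u))\<^sup>2" by (simp add: norm_mult \<mu>)
  also have "\<dots> = (Re (\<mu> * root_moeb \<nu> u))\<^sup>2 + (Im (\<mu> * root_moeb \<nu> u))\<^sup>2" by (rule cmod_power2)
  finally have "(cmod (root_moeb \<nu> u))\<^sup>2 = \<dots>" .
  then have "Complex (sqrt ((cmod (root_moeb \<nu> u))\<^sup>2 - (Im (\<mu> * root_moeb \<nu> u))\<^sup>2)) (Im (\<mu> * root_moeb \<nu> u))
      = \<mu> * root_moeb \<nu> u"
    using pos by (simp add: complex_eq_iff)
  moreover have "cnj \<mu> * \<mu> = 1" using \<mu> by (simp add: complex_norm_square[symmetric] mult.commute)
  ultimately show w: "chart_w \<mu> (chart \<nu> \<mu> u) = root_moeb \<nu> u"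
    by (simp add: chart_w_def chart_def vector_3 mult.assoc[symmetric])
  have "moeb (root1 \<nu> u) (root_moeb \<nu> u) = root2 \<nu> u"
    using u2 by (auto simp: root_moeb_def root_domain_def mem_unit_disc intro: moeb_moeb)
  then show "chart_inv \<mu> (chart \<nu> \<mu> u) = u"
    using sum_prod_roots(1)[OF \<nu>] u2 by (simp add: chart_inv_def symm_def z w root_domain_def)
qed

lemma chart_chart_inv:
  assumes \<nu>: "cmod \<nu> = 1" and \<mu>: "cmod \<mu> = 1" and v: "v \<in> chart_range \<nu> \<mu>"
  shows "chart_inv \<mu> v \<in> chart_domain \<nu> \<mu>" "chart \<nu> \<mu> (chart_inv \<mu> v) = v"
proof -
  define z w where "z = chart_z v" and "w = chart_w \<mu> v"
  have v1: "cmod z < 1" "\<bar>fst v $ 3\<bar> < snd v" "snd v < 1"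
    using v by (auto simp: chart_range_def chart_inv_domain_def z_def)
  have norm_w: "cmod w = snd v" using norm_chart_w[OF \<mu> v1(2)] by (simp add: w_def)
  then have w1: "cmod w < 1" using v1 by simp
  define z' where "z' = moeb z w"
  have z'1: "cmod z' < 1" using norm_moeb_less_1[OF v1(1) w1] by (simp add: z'_def)
  have sector: "\<bar>Im (\<nu> * (z - z'))\<bar> < Re (\<nu> * (z - z'))"
    using v by (simp add: chart_range_def z_def w_def z'_def Let_def)
  have inv: "chart_inv \<mu> v = (z + z', z * z')" by (simp add: chart_inv_def symm_def z_def w_def z'_def)
  note roots = roots_of_sum_prod[OF \<nu> sector]
  have moeb_w: "root_moeb \<nu> (chart_inv \<mu> v) = w"
    unfolding inv root_moeb_def roots(2,3) unfolding z'_def by (rule moeb_moeb[OF v1(1) w1])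
  have "\<bar>fst v $ 3\<bar>\<^sup>2 < (snd v)\<^sup>2" using v1(2) by (intro power_strict_mono) auto
  moreover have "\<mu> * w = Complex (sqrt ((snd v)\<^sup>2 - (fst v $ 3)\<^sup>2)) (fst v $ 3)"
    using \<mu> by (simp add: w_def chart_w_def mult.assoc[symmetric] complex_norm_square[symmetric])
  ultimately have Re_pos: "0 < Re (\<mu> * w)" and Im: "Im (\<mu> * w) = fst v $ 3" by simp_all
  show "chart_inv \<mu> v \<in> chart_domain \<nu> \<mu>"
    using roots v1(1) z'1 Re_pos moeb_w by (simp add: chart_domain_def root_domain_def inv mem_unit_disc)
  show "chart \<nu> \<mu> (chart_inv \<mu> v) = v"
    using roots Im moeb_w norm_w
    by (simp add: chart_def inv z_def chart_z_def vec_eq_iff forall_3 vector_3 prod_eq_iff)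
qed

lemma chart_mem_chart_range:
  assumes \<mu>: "cmod \<mu> = 1" and u: "u \<in> chart_domain \<nu> \<mu>" and \<nu>: "cmod \<nu> = 1"
    and sector: "\<bar>Im (\<nu> * (root1 \<nu> u - root2 \<nu> u))\<bar> < Re (\<nu> * (root1 \<nu> u - root2 \<nu> u))"
  shows "chart \<nu> \<mu> u \<in> chart_range \<nu> \<mu>"
proof -
  note inv = chart_inv_chart[OF \<nu> \<mu> u]
  have u2: "root1 \<nu> u \<in> unit_disc" "root2 \<nu> u \<in> unit_disc" and pos: "0 < Re (\<mu> * root_moeb \<nu> u)"
    using u by (auto simp: chart_domain_def root_domain_def)
  have "\<bar>Im (\<mu> * root_moeb \<nu> u)\<bar> = sqrt ((Im (\<mu> * root_moeb \<nu> u))\<^sup>2)" by simp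
  also have "\<dots> < sqrt ((Re (\<mu> * root_moeb \<nu> u))\<^sup>2 + (Im (\<mu> * root_moeb \<nu> u))\<^sup>2)"
    using pos by (intro real_sqrt_less_mono) simp
  also have "\<dots> = cmod (\<mu> * root_moeb \<nu> u)"
    unfolding cmod_def ..
  also have "\<dots> = cmod (root_moeb \<nu> u)"
    by (simp add: norm_mult \<mu>)
  finally have "\<bar>Im (\<mu> * root_moeb \<nu> u)\<bar> < cmod (root_moeb \<nu> u)" .
  moreover have "cmod (root_moeb \<nu> u) < 1"
    using u2 by (simp add: root_moeb_def mem_unit_disc norm_moeb_less_1)
  moreover have "moeb (root1 \<nu> u) (root_moeb \<nu> u) = root2 \<nu> u"
    using u2 by (simp add: root_moeb_def mem_unit_disc moeb_moeb)
  ultimately show ?thesis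
    using u2 sector inv(1,2)
    by (simp add: chart_range_def chart_inv_domain_def mem_unit_disc chart_def vector_3 norm_mult \<mu> Let_def)
qed

lemma rotation_to_positive_real:
  fixes z :: complex
  assumes "z \<noteq> 0"
  shows "cmod (cnj z / cmod z) = 1" "cnj z / cmod z * z = cmod z"
  using assms by (simp_all add: norm_divide complex_norm_square[symmetric] mult.commute power2_eq_square)

lemma chart_center:
  assumes z: "z1 \<in> unit_disc" "z2 \<in> unit_disc" "z1 \<noteq> z2"
  obtains \<nu> \<mu> where "cmod \<nu> = 1" "cmod \<mu> = 1" "(z1 + z2, z1 * z2) \<in> chart_domain \<nu> \<mu>"
    "chart \<nu> \<mu> (z1 + z2, z1 * z2) \<in> chart_range \<nu> \<mu>"
proof -
  define w where "w = moeb z1 z2"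
  define \<nu> where "\<nu> = cnj (z1 - z2) / cmod (z1 - z2)"
  define \<mu> where "\<mu> = cnj w / cmod w"
  have disc: "cmod z1 < 1" "cmod z2 < 1" using z by (auto simp: mem_unit_disc)
  have "w \<noteq> 0" using moeb_eq_0_iff[OF disc] z(3) by (simp add: w_def)
  then have \<mu>: "cmod \<mu> = 1" "\<mu> * w = cmod w" using rotation_to_positive_real by (simp_all add: \<mu>_def)
  have \<nu>: "cmod \<nu> = 1" "\<nu> * (z1 - z2) = cmod (z1 - z2)"
    using rotation_to_positive_real[of "z1 - z2"] z(3) by (simp_all add: \<nu>_def)
  have sector: "\<bar>Im (\<nu> * (z1 - z2))\<bar> < Re (\<nu> * (z1 - z2))" using \<nu>(2) z(3) by simp
  note roots = roots_of_sum_prod[OF \<nu>(1) sector]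
  have "0 < Re (\<mu> * w)" using \<mu>(2) \<open>w \<noteq> 0\<close> by simp
  then have dom: "(z1 + z2, z1 * z2) \<in> chart_domain \<nu> \<mu>"
    using roots z by (simp add: chart_domain_def root_domain_def root_moeb_def w_def)
  moreover have "chart \<nu> \<mu> (z1 + z2, z1 * z2) \<in> chart_range \<nu> \<mu>"
    using chart_mem_chart_range[OF \<mu>(1) dom \<nu>(1)] sector roots by simp
  ultimately show ?thesis using that \<nu>(1) \<mu>(1) by blast
qed

lemma open_contains_connected_box:
  fixes V :: "('a::real_normed_vector \<times> 'b::topological_space) set"
  assumes "open V" "v \<in> V"
  obtains W J where "open W" "connected W" "open J" "v \<in> W \<times> J" "W \<times> J \<subseteq> V"
proof -
  obtain A J where A: "open A" "open J" "v \<in> A \<times> J" "A \<times> J \<subseteq> V"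
    by (rule open_prod_elim[OF assms])
  then obtain e where "e > 0" "ball (fst v) e \<subseteq> A"
    using open_contains_ball by (metis mem_Times_iff)
  then show ?thesis
    using that[of "ball (fst v) e" J] A by (auto simp: mem_Times_iff)
qed

lemma smooth_inverses_restrict_box:
  assumes D: "open D" and \<phi>: "smooth_on D \<phi>" and \<psi>: "smooth_on V \<psi>"
    and \<psi>\<phi>: "\<And>u. u \<in> D \<Longrightarrow> \<psi> (\<phi> u) = u" and \<psi>V: "\<And>v. v \<in> V \<Longrightarrow> \<psi> v \<in> D" and \<phi>\<psi>: "\<And>v. v \<in> V \<Longrightarrow> \<phi> (\<psi> v) = v"
    and box: "W \<times> J \<subseteq> V" "open W" "open J"
  defines "U \<equiv> {u \<in> D. \<phi> u \<in> W \<times> J}"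
  shows "open U" "\<phi> ` U = W \<times> J" "\<psi> ` (W \<times> J) = U" "smooth_on U \<phi>" "smooth_on (W \<times> J) \<psi>"
proof -
  show "open U"
    unfolding U_def using box by (intro open_Collect_preimage D smooth_on_imp_continuous_on[OF \<phi>] open_Times)
  show "\<phi> ` U = W \<times> J"
    using \<psi>V \<phi>\<psi> box(1) unfolding U_def by (force intro: rev_image_eqI)
  show "\<psi> ` (W \<times> J) = U"
    using \<psi>\<phi> \<psi>V \<phi>\<psi> box(1) unfolding U_def by (force intro: rev_image_eqI)
  show "smooth_on U \<phi>" "smooth_on (W \<times> J) \<psi>"
    using smooth_on_subset[OF \<phi>] smooth_on_subset[OF \<psi> box(1)] by (auto simp: U_def)
qed

lemma local_chart:
  assumes x: "x \<in> symG - royal"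
  shows "\<exists>U W J (\<phi> :: complex \<times> complex \<Rightarrow> (real^3) \<times> real) \<psi>.
      open U \<and> x \<in> U \<and> U \<subseteq> symG - royal \<and>
      open W \<and> connected W \<and> open J \<and>
      \<phi> ` U = W \<times> J \<and> \<psi> ` (W \<times> J) = U \<and>
      (\<forall>u\<in>U. \<psi> (\<phi> u) = u) \<and> (\<forall>v\<in>W \<times> J. \<phi> (\<psi> v) = v) \<and>
      smooth_on U \<phi> \<and> smooth_on (W \<times> J) \<psi> \<and>
      (\<forall>u\<in>U. snd (\<phi> u) = qmap u)"
proof -
  obtain z1 z2 where z: "z1 \<in> unit_disc" "z2 \<in> unit_disc" "z1 \<noteq> z2" and x_eq: "x = (z1 + z2, z1 * z2)"
    using x unfolding mem_symG_minus_royal by blast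
  obtain \<nu> \<mu> where \<nu>: "cmod \<nu> = 1" and \<mu>: "cmod \<mu> = 1" and x_dom: "x \<in> chart_domain \<nu> \<mu>"
    and x_range: "chart \<nu> \<mu> x \<in> chart_range \<nu> \<mu>"
    using chart_center[OF z] unfolding x_eq by blast
  obtain W J where WJ: "open W" "connected W" "open J" "chart \<nu> \<mu> x \<in> W \<times> J" "W \<times> J \<subseteq> chart_range \<nu> \<mu>"
    by (rule open_contains_connected_box[OF open_chart_range[OF \<mu>] x_range])
  define U where "U = {u \<in> chart_domain \<nu> \<mu>. chart \<nu> \<mu> u \<in> W \<times> J}"
  have chart_inv_range: "smooth_on (chart_range \<nu> \<mu>) (chart_inv \<mu>)"
    by (rule smooth_on_subset[OF smooth_on_chart_inv[OF \<mu>]]) (auto simp: chart_range_def)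
  note restrict = smooth_inverses_restrict_box[OF open_chart_domain smooth_on_chart chart_inv_range
      chart_inv_chart(3)[OF \<nu> \<mu>] chart_chart_inv[OF \<nu> \<mu>] WJ(5,1,3), folded U_def]
  have "\<forall>u\<in>U. chart_inv \<mu> (chart \<nu> \<mu> u) = u" "\<forall>v\<in>W \<times> J. chart \<nu> \<mu> (chart_inv \<mu> v) = v"
    using chart_inv_chart(3)[OF \<nu> \<mu>] chart_chart_inv(2)[OF \<nu> \<mu>] WJ(5) by (auto simp: U_def)
  moreover have "x \<in> U" using x_dom WJ(4) by (simp add: U_def)
  moreover have "U \<subseteq> symG - royal"
    using root_domain_subset[OF \<nu>] by (auto simp: U_def chart_domain_def)
  moreover have "\<forall>u\<in>U. snd (chart \<nu> \<mu> u) = qmap u"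
    using qmap_root_domain[OF \<nu>] by (auto simp: U_def chart_domain_def chart_def root_moeb_def)
  ultimately show ?thesis
    using restrict WJ(1-3)
    by (intro exI[of _ U] exI[of _ W] exI[of _ J] exI[of _ "chart \<nu> \<mu>"] exI[of _ "chart_inv \<mu>"]) simp
qed

section \<open>Smoothness and submersivity of q\<close>

lemma open_symG_minus_royal: "open (symG - royal)"
  using local_chart by (metis open_subopen)

text \<open>q^2 = |z1 - z2|^2 / |1 - cnj z1 z2|^2 written symmetrically in s = z1 + z2 and p = z1 z2.\<close>

definition q_denom :: "complex \<times> complex \<Rightarrow> real" where
  "q_denom u = 1 + (cmod (snd u))\<^sup>2 - (cmod (fst u))\<^sup>2 / 2 + cmod (discr u) / 2"

lemma qmap_eq_sqrt:
  assumes "x \<in> symG - royal"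
  shows "qmap x = sqrt (cmod (discr x) / q_denom x)" "q_denom x > 0" "discr x \<noteq> 0"
proof -
  obtain z1 z2 where z: "z1 \<in> unit_disc" "z2 \<in> unit_disc" "z1 \<noteq> z2" and x: "x = (z1 + z2, z1 * z2)"
    using assms unfolding mem_symG_minus_royal by blast
  have discr_x: "discr x = (z1 - z2)\<^sup>2" by (simp add: x discr_def power2_eq_square algebra_simps)
  then show "discr x \<noteq> 0" using z(3) by simp
  have n: "cmod (discr x) = (cmod (z1 - z2))\<^sup>2" unfolding discr_x by (simp add: norm_power)
  have "q_denom x = 1 + (cmod (z1 * z2))\<^sup>2 - (cmod (z1 + z2))\<^sup>2 / 2 + (cmod (z1 - z2))\<^sup>2 / 2"
    unfolding q_denom_def n by (simp add: x)
  also have "\<dots> = (cmod (1 - cnj z1 * z2))\<^sup>2"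
    unfolding cmod_power2 by (simp add: power2_eq_square field_simps)
  finally have d: "q_denom x = (cmod (1 - cnj z1 * z2))\<^sup>2" .
  have "1 - cnj z1 * z2 \<noteq> 0" using z by (intro moeb_denominator_nonzero) (auto simp: mem_unit_disc)
  then show "q_denom x > 0" by (simp add: d)
  have "qmap x = cmod (z1 - z2) / cmod (1 - cnj z1 * z2)"
    using z by (simp add: x qmap_sum_prod moeb_def norm_divide)
  also have "\<dots> = sqrt ((cmod (z1 - z2))\<^sup>2 / (cmod (1 - cnj z1 * z2))\<^sup>2)"
    by (simp add: real_sqrt_divide)
  finally show "qmap x = sqrt (cmod (discr x) / q_denom x)" by (simp add: n d)
qed

lemma smooth_on_qmap: "smooth_on (symG - royal) qmap"
proof (rule smooth_on_cong[OF open_symG_minus_royal _ qmap_eq_sqrt(1)])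
  let ?S = "symG - royal"
  have n: "smooth_on ?S (\<lambda>u. cmod (discr u))"
    by (intro smooth_on_cmod open_symG_minus_royal smooth_on_discr qmap_eq_sqrt(3))
  have "smooth_on ?S q_denom"
    unfolding q_denom_def[abs_def] divide_inverse
    by (intro smooth_on_add smooth_on_diff smooth_on_mult smooth_on_cmod_power2 smooth_on_fst smooth_on_snd
        smooth_on_id smooth_on_const n)
  then show "smooth_on ?S (\<lambda>u. sqrt (cmod (discr u) / q_denom u))"
    unfolding divide_inverse
    by (intro smooth_on_sqrt open_symG_minus_royal smooth_on_mult n smooth_on_inverse)
       (use qmap_eq_sqrt in auto)
qed

lemma differentiable_at_real_sqrt:
  "f differentiable (at x) \<Longrightarrow> 0 < f x \<Longrightarrow> (\<lambda>x. sqrt (f x)) differentiable (at x)"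
  unfolding differentiable_def using has_derivative_real_sqrt by blast

lemma differentiable_at_qmap:
  assumes x: "x \<in> symG - royal"
  shows "qmap differentiable (at x)"
proof -
  have lin: "fst differentiable (at x)" "snd differentiable (at x)"
    by (simp_all add: bounded_linear_imp_differentiable bounded_linear_fst bounded_linear_snd)
  have sq: "(\<lambda>z. (cmod z)\<^sup>2) differentiable (at z)" for z
    using differentiable_on_sqnorm differentiable_on_eq_differentiable_at[OF open_UNIV] by blast
  have "discr differentiable (at x)"
    unfolding discr_def[abs_def] by (intro derivative_intros lin)
  then have n: "(\<lambda>u. cmod (discr u)) differentiable (at x)"
    by (rule differentiable_compose[where g = discr, OF differentiable_norm_at[OF qmap_eq_sqrt(3)[OF x]]])
  have "(\<lambda>u. (cmod (fst u))\<^sup>2) differentiable (at x)" "(\<lambda>u. (cmod (snd u))\<^sup>2) differentiable (at x)"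
    by (rule differentiable_compose[OF sq lin(1)], rule differentiable_compose[OF sq lin(2)])
  then have "q_denom differentiable (at x)"
    unfolding q_denom_def[abs_def]
    by (intro differentiable_add differentiable_diff differentiable_divide differentiable_const n) simp_all
  then have "(\<lambda>u. sqrt (cmod (discr u) / q_denom u)) differentiable (at x)"
    using qmap_eq_sqrt[OF x]
    by (intro differentiable_at_real_sqrt derivative_intros n) (auto simp: zero_less_divide_iff)
  then obtain D where "((\<lambda>u. sqrt (cmod (discr u) / q_denom u)) has_derivative D) (at x)"
    by (auto simp: differentiable_def)
  then have "(qmap has_derivative D) (at x)"
    by (rule has_derivative_transform_within_open[OF _ open_symG_minus_royal x]) (simp add: qmap_eq_sqrt)
  then show ?thesis by (auto simp: differentiable_def)
qed

lemma surj_derivative_along_curve: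
  fixes f :: "'a::real_normed_vector \<Rightarrow> real" and \<gamma> :: "real \<Rightarrow> 'a"
  assumes f: "(f has_derivative D) (at (\<gamma> 0))" and \<gamma>: "\<gamma> differentiable (at 0)"
    and r: "((\<lambda>t. f (\<gamma> t)) has_real_derivative r) (at 0)" "r \<noteq> 0"
  shows "surj D"
proof -
  obtain \<Gamma> where \<Gamma>: "(\<gamma> has_derivative \<Gamma>) (at 0)" using \<gamma> by (auto simp: differentiable_def)
  have "((\<lambda>t. f (\<gamma> t)) has_derivative (\<lambda>h. D (\<Gamma> h))) (at 0)"
    using diff_chain_at[OF \<Gamma> f] by (simp add: o_def)
  moreover have "((\<lambda>t. f (\<gamma> t)) has_derivative (\<lambda>h. r * h)) (at 0)"
    using r(1) by (simp add: has_field_derivative_def)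
  ultimately have D\<Gamma>: "(\<lambda>h. D (\<Gamma> h)) = (\<lambda>h. r * h)" by (rule has_derivative_unique)
  show "surj D"
  proof (rule surjI)
    fix y show "D (\<Gamma> (y / r)) = y" using fun_cong[OF D\<Gamma>, of "y / r"] r(2) by simp
  qed
qed

lemma qmap_moeb_pair:
  assumes "z \<in> unit_disc" "cmod w < 1"
  shows "qmap (z + moeb z w, z * moeb z w) = cmod w"
proof -
  have "cmod z < 1" using assms(1) by (simp add: mem_unit_disc)
  with assms show ?thesis by (simp add: qmap_sum_prod mem_unit_disc norm_moeb_less_1 moeb_moeb)
qed

text \<open>Along the curve that keeps z1 and moves z2 so that moeb z1 z2 is scaled by 1 + t,
  q grows linearly.\<close>

lemma surj_derivative_qmap:
  assumes x: "x \<in> symG - royal" and D: "(qmap has_derivative D) (at x)"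
  shows "surj D"
proof -
  obtain z1 z2 where z: "z1 \<in> unit_disc" "z2 \<in> unit_disc" "z1 \<noteq> z2" and x_eq: "x = (z1 + z2, z1 * z2)"
    using x unfolding mem_symG_minus_royal by blast
  have disc: "cmod z1 < 1" "cmod z2 < 1" using z by (auto simp: mem_unit_disc)
  define w where "w = moeb z1 z2"
  define r where "r = cmod w"
  have r: "0 < r" "r < 1"
    using moeb_eq_0_iff[OF disc] norm_moeb_less_1[OF disc] z(3) by (auto simp: r_def w_def)
  define \<gamma> where "\<gamma> t = (z1 + moeb z1 ((1 + t) *\<^sub>R w), z1 * moeb z1 ((1 + t) *\<^sub>R w))" for t :: real
  have "\<gamma> 0 = x" using moeb_moeb[OF disc] by (simp add: \<gamma>_def x_eq w_def)
  have "1 - cnj z1 * w \<noteq> 0"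
    using moeb_denominator_nonzero[OF disc(1) norm_moeb_less_1[OF disc]] by (simp add: w_def)
  then have "(\<lambda>t. moeb z1 ((1 + t) *\<^sub>R w)) differentiable (at 0)"
    unfolding moeb_def
    by (intro differentiable_divide differentiable_diff differentiable_mult differentiable_scaleR
        differentiable_add differentiable_const differentiable_ident) simp
  then have "\<gamma> differentiable (at 0)"
    unfolding \<gamma>_def[abs_def]
    by (intro differentiable_Pair differentiable_add differentiable_mult differentiable_const)
  define \<delta> where "\<delta> = min 1 (1 / r - 1)"
  have "\<delta> > 0" using r by (simp add: \<delta>_def field_simps)
  have linear: "qmap (\<gamma> t) = r + r * t" if "t \<in> ball 0 \<delta>" for t
  proof -
    have t: "\<bar>t\<bar> < 1" "r * \<bar>t\<bar> < 1 - r" using that r by (auto simp: \<delta>_def field_simps)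
    have "cmod ((1 + t) *\<^sub>R w) = (1 + t) * r" using t(1) by (simp add: r_def)
    moreover have "(1 + t) * r < 1" using t(2) mult_left_mono[OF abs_ge_self, of r t] r(1) by argo
    ultimately show ?thesis using z(1) by (simp add: \<gamma>_def qmap_moeb_pair algebra_simps)
  qed
  have "((\<lambda>t. r + r * t) has_real_derivative r) (at 0)"
    by (auto intro!: derivative_eq_intros)
  then have "((\<lambda>t. qmap (\<gamma> t)) has_real_derivative r) (at 0)"
    by (rule has_field_derivative_transform_within_open[OF _ open_ball[of 0 \<delta>]])
       (simp_all add: \<open>\<delta> > 0\<close> linear)
  then show "surj D"
    using surj_derivative_along_curve[of qmap D \<gamma>] D \<open>\<gamma> 0 = x\<close> \<open>\<gamma> differentiable (at 0)\<close> r by auto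
qed

section \<open>The leaves and their double covers\<close>

lemma level_set_homeomorphic_slice:
  assumes \<phi>U: "\<phi> ` U = W \<times> J" and \<psi>\<phi>: "\<forall>u\<in>U. \<psi> (\<phi> u) = u" and \<phi>\<psi>: "\<forall>v\<in>W \<times> J. \<phi> (\<psi> v) = v"
    and cont: "continuous_on U \<phi>" "continuous_on (W \<times> J) \<psi>"
    and q: "\<forall>u\<in>U. snd (\<phi> u) = q u" and a: "a \<in> J"
  shows "U \<inter> q -` {a} homeomorphic W"
proof -
  have slice: "\<psi> (w, a) \<in> U \<inter> q -` {a}" if w: "w \<in> W" for w
  proof -
    have "(w, a) \<in> \<phi> ` U" using \<phi>U w a by simp
    then obtain u where "u \<in> U" "(w, a) = \<phi> u" by blast
    then have "\<psi> (w, a) \<in> U" using \<psi>\<phi> by simp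
    moreover have "q (\<psi> (w, a)) = a" using q \<phi>\<psi> w a calculation by (metis mem_Sigma_iff snd_conv)
    ultimately show ?thesis by simp
  qed
  have \<phi>_level: "\<phi> u = (fst (\<phi> u), a)" if "u \<in> U \<inter> q -` {a}" for u
    using that q by (simp add: prod_eq_iff)
  have "homeomorphism (U \<inter> q -` {a}) W (\<lambda>u. fst (\<phi> u)) (\<lambda>w. \<psi> (w, a))"
  proof
    show "continuous_on (U \<inter> q -` {a}) (\<lambda>u. fst (\<phi> u))"
      by (intro continuous_on_fst continuous_on_subset[OF cont(1)]) blast
    show "continuous_on W (\<lambda>w. \<psi> (w, a))"
      by (rule continuous_on_compose2[OF cont(2)]) (use a in \<open>auto intro!: continuous_intros\<close>)
    show "(\<lambda>u. fst (\<phi> u)) ` (U \<inter> q -` {a}) \<subseteq> W"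
      using \<phi>U by (auto simp: mem_Times_iff image_subset_iff dest!: equalityD1)
    show "(\<lambda>w. \<psi> (w, a)) ` W \<subseteq> U \<inter> q -` {a}"
      using slice by blast
    show "\<psi> (fst (\<phi> u), a) = u" if "u \<in> U \<inter> q -` {a}" for u
      using \<phi>_level[OF that] \<psi>\<phi> that by (metis IntD1)
    show "fst (\<phi> (\<psi> (w, a))) = w" if "w \<in> W" for w
      using \<phi>\<psi> that a by simp
  qed
  then show ?thesis unfolding homeomorphic_def by blast
qed

lemma leaf_locally_euclidean:
  assumes x: "x \<in> (symG - royal) \<inter> qmap -` {a}"
  shows "\<exists>U. openin (top_of_set ((symG - royal) \<inter> qmap -` {a})) U \<and> x \<in> U \<and>
          (\<exists>V :: (real^3) set. open V \<and> U homeomorphic V)"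
proof -
  obtain U W J and \<phi> :: "complex \<times> complex \<Rightarrow> (real^3) \<times> real" and \<psi> where
    U: "open U" "x \<in> U" "U \<subseteq> symG - royal" and W: "open W"
    and \<phi>U: "\<phi> ` U = W \<times> J" and inv: "\<forall>u\<in>U. \<psi> (\<phi> u) = u" "\<forall>v\<in>W \<times> J. \<phi> (\<psi> v) = v"
    and smooth: "smooth_on U \<phi>" "smooth_on (W \<times> J) \<psi>" and q: "\<forall>u\<in>U. snd (\<phi> u) = qmap u"
    using local_chart[of x] x by blast
  have "a \<in> J" using \<phi>U U(2) q x by (metis IntD2 imageI mem_Times_iff singletonD vimageE)
  have "U \<inter> qmap -` {a} homeomorphic W"
    using level_set_homeomorphic_slice[OF \<phi>U inv smooth[THEN smooth_on_imp_continuous_on] q \<open>a \<in> J\<close>] .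
  moreover have "(symG - royal) \<inter> qmap -` {a} \<inter> U = U \<inter> qmap -` {a}" using U(3) by blast
  moreover have "openin (top_of_set ((symG - royal) \<inter> qmap -` {a})) ((symG - royal) \<inter> qmap -` {a} \<inter> U)"
    by (rule openin_open_Int[OF U(1)])
  ultimately show ?thesis
    using U(2) x W by (intro exI[of _ "(symG - royal) \<inter> qmap -` {a} \<inter> U"] conjI exI[of _ W]) auto
qed

lemma quotient_map_local_sections:
  fixes f :: "'a::topological_space \<Rightarrow> 'b::topological_space"
  assumes cont: "continuous_on S f" and img: "f ` S = T"
    and sections: "\<And>y. y \<in> T \<Longrightarrow> \<exists>N \<sigma>. open N \<and> y \<in> N \<and> continuous_on (T \<inter> N) \<sigma> \<and>
                      \<sigma> \<in> T \<inter> N \<rightarrow> S \<and> (\<forall>z\<in>T \<inter> N. f (\<sigma> z) = z)"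
  shows "quotient_map (top_of_set S) (top_of_set T) f"
  unfolding quotient_map_def
proof (intro conjI allI impI iffI)
  show "f ` topspace (top_of_set S) = topspace (top_of_set T)" using img by simp
  fix U assume U: "U \<subseteq> topspace (top_of_set T)"
  show "openin (top_of_set S) {x \<in> topspace (top_of_set S). f x \<in> U}" if "openin (top_of_set T) U"
    using continuous_openin_preimage[OF cont _ that] img by (auto simp: Int_def vimage_def)
  assume pre: "openin (top_of_set S) {x \<in> topspace (top_of_set S). f x \<in> U}"
  show "openin (top_of_set T) U"
    unfolding openin_subopen[of _ U]
  proof
    fix y assume "y \<in> U"
    then obtain N \<sigma> where N: "open N" "y \<in> N" and \<sigma>: "continuous_on (T \<inter> N) \<sigma>" "\<sigma> \<in> T \<inter> N \<rightarrow> S"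
      "\<forall>z\<in>T \<inter> N. f (\<sigma> z) = z"
      using sections U by (metis subsetD topspace_euclidean_subtopology)
    have "openin (top_of_set S) {x \<in> S. f x \<in> U}" using pre by simp
    then have "openin (top_of_set (T \<inter> N)) (T \<inter> N \<inter> \<sigma> -` {x \<in> S. f x \<in> U})"
      by (rule continuous_openin_preimage[OF \<sigma>(1,2)])
    moreover have "T \<inter> N \<inter> \<sigma> -` {x \<in> S. f x \<in> U} = U \<inter> N"
      using \<sigma>(2,3) U by auto
    ultimately have "openin (top_of_set T) (U \<inter> N)"
      using openin_trans openin_open_Int[OF N(1)] by metis
    then show "\<exists>V. openin (top_of_set T) V \<and> y \<in> V \<and> V \<subseteq> U" using N(2) \<open>y \<in> U\<close> by blast
  qed
qed

lemma mem_Fa_iff: "(z1, z2) \<in> Fa a \<longleftrightarrow> z1 \<in> unit_disc \<and> z2 \<in> unit_disc \<and> cmod (moeb z1 z2) = a"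
  by (simp add: Fa_def)

lemma image_symm_Fa:
  assumes a: "0 < a"
  shows "symm ` Fa a = (symG - royal) \<inter> qmap -` {a}"
proof (intro equalityI subsetI)
  fix y assume "y \<in> symm ` Fa a"
  then obtain z1 z2 where z: "z1 \<in> unit_disc" "z2 \<in> unit_disc" "cmod (moeb z1 z2) = a" and y: "y = symm (z1, z2)"
    unfolding mem_Fa_iff by (metis mem_Fa_iff imageE prod.collapse)
  then have "z1 \<noteq> z2" using a by (auto simp: moeb_def)
  then have "y \<in> symG - royal" unfolding mem_symG_minus_royal y symm_def using z by auto
  moreover have "qmap y = a" using z qmap_sum_prod[OF z(1,2)] by (simp add: y symm_def)
  ultimately show "y \<in> (symG - royal) \<inter> qmap -` {a}" by simp
next
  fix y assume y: "y \<in> (symG - royal) \<inter> qmap -` {a}"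
  then have "y \<in> symG - royal" by blast
  then obtain z1 z2 where z: "z1 \<in> unit_disc" "z2 \<in> unit_disc" "y = (z1 + z2, z1 * z2)"
    unfolding mem_symG_minus_royal by blast
  have "qmap y = a" using y by simp
  then have "(z1, z2) \<in> Fa a" using z qmap_sum_prod[OF z(1,2)] by (simp add: mem_Fa_iff)
  then show "y \<in> symm ` Fa a" using z(3) by (force simp: symm_def)
qed

lemma symm_eq_iff: "symm w = symm w' \<longleftrightarrow> w' = w \<or> w' = prod.swap w"
proof
  assume "symm w = symm w'"
  then have "fst w + snd w = fst w' + snd w'" "fst w * snd w = fst w' * snd w'"
    by (auto simp: symm_def)
  from sum_product_eq_imp[OF this] show "w' = w \<or> w' = prod.swap w" by (cases w; cases w') auto
qed (auto simp: symm_def algebra_simps)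

lemma quotient_map_symm_Fa:
  assumes a: "0 < a"
  shows "quotient_map (top_of_set (Fa a)) (top_of_set ((symG - royal) \<inter> qmap -` {a})) symm"
proof (rule quotient_map_local_sections)
  show "continuous_on (Fa a) symm" unfolding symm_def by (intro continuous_intros)
  show "symm ` Fa a = (symG - royal) \<inter> qmap -` {a}" by (rule image_symm_Fa[OF a])
  fix y assume "y \<in> (symG - royal) \<inter> qmap -` {a}"
  then have "y \<in> symG - royal" by blast
  then obtain z1 z2 where z: "z1 \<in> unit_disc" "z2 \<in> unit_disc" "z1 \<noteq> z2" "y = (z1 + z2, z1 * z2)"
    unfolding mem_symG_minus_royal by blast
  obtain \<nu> \<mu> where \<nu>: "cmod \<nu> = 1" and "y \<in> chart_domain \<nu> \<mu>"
    using chart_center[OF z(1-3)] z(4) by blast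
  then have y_dom: "y \<in> root_domain \<nu>" by (simp add: chart_domain_def)
  let ?L = "(symG - royal) \<inter> qmap -` {a}"
  define \<sigma> where "\<sigma> u = (root1 \<nu> u, root2 \<nu> u)" for u
  have cont: "continuous_on (?L \<inter> root_domain \<nu>) \<sigma>"
    unfolding \<sigma>_def
    by (intro continuous_on_subset[OF smooth_on_imp_continuous_on] smooth_on_Pair smooth_on_subset[OF smooth_on_roots(1)]
        smooth_on_subset[OF smooth_on_roots(2)]) (auto simp: root_domain_def)
  have lift: "\<sigma> u \<in> Fa a" "symm (\<sigma> u) = u" if u: "u \<in> ?L \<inter> root_domain \<nu>" for u
  proof -
    have dom: "u \<in> root_domain \<nu>" and "qmap u = a" using u by auto
    then have "cmod (moeb (root1 \<nu> u) (root2 \<nu> u)) = a" using qmap_root_domain[OF \<nu> dom] by simp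
    then show "\<sigma> u \<in> Fa a" using dom by (simp add: \<sigma>_def mem_Fa_iff root_domain_def)
    have "u = (root1 \<nu> u + root2 \<nu> u, root1 \<nu> u * root2 \<nu> u)"
      by (rule sum_prod_roots(1)[OF \<nu>]) (use dom in \<open>simp add: root_domain_def\<close>)
    then show "symm (\<sigma> u) = u" unfolding \<sigma>_def symm_def fst_conv snd_conv by (rule sym)
  qed
  show "\<exists>N \<sigma>. open N \<and> y \<in> N \<and> continuous_on (?L \<inter> N) \<sigma> \<and> \<sigma> \<in> ?L \<inter> N \<rightarrow> Fa a \<and>
      (\<forall>z\<in>?L \<inter> N. symm (\<sigma> z) = z)"
    using open_root_domain y_dom cont lift by (intro exI[of _ "root_domain \<nu>"] exI[of _ \<sigma>]) auto
qed

lemma qmap_has_surjective_derivative: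
  "x \<in> symG - royal \<Longrightarrow> \<exists>q'. (qmap has_derivative q') (at x) \<and> surj q'"
  using differentiable_at_qmap surj_derivative_qmap by (metis differentiable_def)

lemma Fa_swap: "(z1, z2) \<in> Fa a \<Longrightarrow> (z2, z1) \<in> Fa a"
  using norm_moeb_commute by (auto simp: mem_Fa_iff)

theorem theorem2p6:
  shows "(
  qmap ` (symG - royal) \<subseteq> {0<..<1} \<and>
   smooth_on (symG - royal) qmap \<and>
   (\<forall>x \<in> symG - royal. \<exists>q'. (qmap has_derivative q') (at x) \<and> surj q')) \<and> (
  open (symG - royal) \<and> qmap ` (symG - royal) = {0<..<1} \<and>
   (\<forall>x \<in> symG - royal. \<exists>U W J (\<phi> :: complex \<times> complex \<Rightarrow> (real^3) \<times> real) \<psi>.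
      open U \<and> x \<in> U \<and> U \<subseteq> symG - royal \<and>
      open W \<and> connected W \<and> open J \<and>
      \<phi> ` U = W \<times> J \<and> \<psi> ` (W \<times> J) = U \<and>
      (\<forall>u\<in>U. \<psi> (\<phi> u) = u) \<and> (\<forall>v\<in>W \<times> J. \<phi> (\<psi> v) = v) \<and>
      smooth_on U \<phi> \<and> smooth_on (W \<times> J) \<psi> \<and>
      (\<forall>u\<in>U. snd (\<phi> u) = qmap u))) \<and> (
  \<forall>a \<in> {0<..<1::real}. \<forall>x \<in> (symG - royal) \<inter> qmap -` {a}.
      \<exists>U. openin (top_of_set ((symG - royal) \<inter> qmap -` {a})) U \<and> x \<in> U \<and>
          (\<exists>V :: (real^3) set. open V \<and> U homeomorphic V)) \<and> (
  \<forall>a \<in> {0<..<1::real}.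
      (\<forall>z1 z2. (z1, z2) \<in> Fa a \<longrightarrow> (z2, z1) \<in> Fa a) \<and>
      symm ` Fa a = (symG - royal) \<inter> qmap -` {a} \<and>
      (\<forall>w\<in>Fa a. \<forall>w'\<in>Fa a. symm w = symm w' \<longleftrightarrow> (w' = w \<or> w' = prod.swap w)) \<and>
      quotient_map (top_of_set (Fa a)) (top_of_set ((symG - royal) \<inter> qmap -` {a})) symm)"
proof (intro conjI ballI allI impI)
  show "qmap ` (symG - royal) \<subseteq> {0<..<1}" "qmap ` (symG - royal) = {0<..<1}"
    by (simp_all add: qmap_image)
  show "smooth_on (symG - royal) qmap" by (rule smooth_on_qmap)
  show "open (symG - royal)" by (rule open_symG_minus_royal)
  fix a :: real assume "a \<in> {0<..<1}"
  then show "symm ` Fa a = (symG - royal) \<inter> qmap -` {a}"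
    and "quotient_map (top_of_set (Fa a)) (top_of_set ((symG - royal) \<inter> qmap -` {a})) symm"
    by (simp_all add: image_symm_Fa quotient_map_symm_Fa)
qed (rule qmap_has_surjective_derivative local_chart leaf_locally_euclidean Fa_swap symm_eq_iff; assumption)+

end
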